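(* Let $n\ge 3$ and let $H(t)$, $0\le t\le T$, be a piecewise-continuous Hamiltonian on $n$ qubits which at every time is U(1)-invariant and 3-local. Then the 3-body phase $\Phi_3$ and the phase $\Delta_3$ of the unitary generated by $H$ satisfy $$\Phi_3=2^{n-3}\,\Delta_3 \pmod{2\pi}.$$
   Context: Qubits $1,\dots,n$, Hilbert space $(\mathbb{C}^2)^{\otimes n}$, $Z_j$ the Pauli $Z$ on qubit $j$. An operator is $k$-local if it is a sum of terms each acting non-trivially on at most $k$ qubits. For $m=0,\dots,n$, $\Pi_m$ is the projector onto the span of computational basis states with exactly $m$ qubits in state $|1\rangle$. A Hamiltonian is U(1)-invariant if it commutes with $\sum_j Z_j$. For such $H(t)$, $V=\mathcal{T}\exp(-i\int_0^T H(t)dt)$ (time-ordered exponential) satisfies $V=\bigoplus_m V_m$ with $V_m$ the restriction of $V$ to the range of $\Pi_m$; $\theta_m=\arg\det(V_m)\in(-\pi,\pi]$; $\Delta_3=\theta_{n-1}-\theta_1-(n-2)(\theta_n-\theta_0)\pmod{2\pi}$. Define $C_l=\sum_{i_1<\cdots<i_l}Z_{i_1}\cdots Z_{i_l}$, $c_l(m)=\sum_{s=0}^l(-1)^s\binom{m}{s}\binom{n-m}{l-s}$ (so $C_l=\sum_m c_l(m)\Pi_m$), and the $l$-body phase $\Phi_l=-\int_0^T\mathrm{Tr}[H(t)C_l]\,dt=\sum_{m=0}^n c_l(m)\theta_m\pmod{2\pi}$. *)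

theory Defs
  imports "HOL-Analysis.Analysis"
begin

text \<open>Qubits are the elements of a finite type 'q (so n = CARD('q)).  A computational
basis state is identified with the set of qubits that are in state |1>, so operators on
(C^2)^{\<otimes> n} are matrices indexed by 'q set.\<close>

type_synonym 'q op = "complex ^ ('q set) ^ ('q set)"

definition pauliZ :: "'q::finite \<Rightarrow> 'q op" where
  "pauliZ j = (\<chi> S S'. if S = S' then (if j \<in> S then -1 else 1) else 0)"

definition totalZ :: "'q::finite op" where
  "totalZ = (\<Sum>j\<in>UNIV. pauliZ j)"

text \<open>M acts non-trivially only on the qubits in A, i.e. M = M_A \<otimes> Id on the complement.\<close>
definition acts_within :: "'q::finite set \<Rightarrow> 'q op \<Rightarrow> bool" where
  "acts_within A M \<longleftrightarrow> (\<exists>f. \<forall>S S'. M $ S $ S' =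
      (if S - A = S' - A then f (S \<inter> A) (S' \<inter> A) else 0))"

definition k_local :: "nat \<Rightarrow> 'q::finite op \<Rightarrow> bool" where
  "k_local k M \<longleftrightarrow> (\<exists>F. (\<forall>A. acts_within A (F A)) \<and>
      M = (\<Sum>A\<in>{A. card A \<le> k}. F A))"

definition u1_invariant :: "'q::finite op \<Rightarrow> bool" where
  "u1_invariant M \<longleftrightarrow> M ** totalZ = totalZ ** M"

definition hermitian :: "'q::finite op \<Rightarrow> bool" where
  "hermitian M \<longleftrightarrow> (\<forall>S S'. M $ S $ S' = cnj (M $ S' $ S))"

definition piecewise_continuous :: "real \<Rightarrow> (real \<Rightarrow> 'a::topological_space) \<Rightarrow> bool" where
  "piecewise_continuous T f \<longleftrightarrow> (\<exists>D. finite D \<and> D \<subseteq> {0..T} \<and>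
      continuous_on ({0..T} - D) f \<and>
      (\<forall>s\<in>D. (\<exists>l. (f \<longlongrightarrow> l) (at s within {0..<s})) \<and>
              (\<exists>r. (f \<longlongrightarrow> r) (at s within {s<..T}))))"

definition time_ordered_exp :: "real \<Rightarrow> (real \<Rightarrow> 'q::finite op) \<Rightarrow> (real \<Rightarrow> 'q op) \<Rightarrow> bool" where
  "time_ordered_exp T H V \<longleftrightarrow> continuous_on {0..T} V \<and>
     (\<forall>t\<in>{0..T}. ((\<lambda>s. \<chi> a b. - \<i> * (H s ** V s) $ a $ b) has_integral (V t - mat 1)) {0..t})"

text \<open>Projector \<Pi>_m onto states with exactly m ones, and determinant of the block V_m
 (Leibniz formula over the basis of the range of \<Pi>_m).\<close>
definition Pi_proj :: "nat \<Rightarrow> 'q::finite op" where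
  "Pi_proj m = (\<chi> S S'. if S = S' \<and> card S = m then 1 else 0)"

definition block_det :: "'q::finite op \<Rightarrow> nat \<Rightarrow> complex" where
  "block_det V m = (\<Sum>p\<in>{p. p permutes {S::'q set. card S = m}}.
       of_int (sign p) * (\<Prod>S\<in>{S. card S = m}. V $ S $ p S))"

definition theta :: "'q::finite op \<Rightarrow> nat \<Rightarrow> real" where
  "theta V m = Arg (block_det V m)"

definition Delta3 :: "'q::finite op \<Rightarrow> real" where
  "Delta3 V = theta V (CARD('q) - 1) - theta V 1
      - (real CARD('q) - 2) * (theta V (CARD('q)) - theta V 0)"

text \<open>C_l = sum over l-subsets B of qubits of the product of Z_j, j \<in> B (these commute and
are diagonal, so the product is the diagonal matrix of the products of diagonal entries).\<close>
definition C_op :: "nat \<Rightarrow> 'q::finite op" where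
  "C_op l = (\<Sum>B\<in>{B::'q set. card B = l}.
      (\<chi> S S'. if S = S' then (\<Prod>j\<in>B. pauliZ j $ S $ S) else 0))"

definition body_phase :: "nat \<Rightarrow> real \<Rightarrow> (real \<Rightarrow> 'q::finite op) \<Rightarrow> complex" where
  "body_phase l T H = - integral {0..T} (\<lambda>t. trace (H t ** C_op l))"

definition cong_2pi :: "complex \<Rightarrow> complex \<Rightarrow> bool" where
  "cong_2pi x y \<longleftrightarrow> (\<exists>k::int. x - y = of_int k * 2 * of_real pi)"

end

theory Submission
  imports Defs
begin

text \<open>Both sides are integer combinations of the integrated block traces
  \<open>J\<^sub>m = \<integral>\<^sub>0\<^sup>T tr(\<Pi>\<^sub>m H(t)) dt\<close>.
  U(1)-invariance makes \<open>H(t)\<close> block diagonal, so Liouville's formula on each block gives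
  \<open>det V\<^sub>m = exp(-i J\<^sub>m)\<close>, i.e. \<open>\<theta>\<^sub>m \<equiv> -J\<^sub>m\<close> (mod 2\<pi>), since \<open>J\<^sub>m\<close> is real for hermitian \<open>H\<close>.
  On the other side, a term \<open>M\<close> acting on a set \<open>A\<close> of at most three qubits is orthogonal to \<open>C\<^sub>3\<close>
  unless \<open>|A| = 3\<close>, when \<open>tr(M C\<^sub>3)\<close> is \<open>2\<^bsup>n-3\<^esup>\<close> times the alternating sum of the diagonal of
  \<open>M\<close> over the subsets of \<open>A\<close>. Expressing the block traces of \<open>M\<close> in the sectors
  \<open>m = 0, 1, n-1, n\<close> through the same diagonal shows
  \<open>tr(M C\<^sub>3) = 2\<^bsup>n-3\<^esup> (tr\<^sub>n\<^sub>-\<^sub>1 M - tr\<^sub>1 M - (n-2)(tr\<^sub>n M - tr\<^sub>0 M))\<close> for every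
  3-local \<open>M\<close>; integrating over \<open>[0,T]\<close> gives the claim.\<close>

section \<open>The three-body operator against a local term\<close>

definition block_trace :: "'q::finite op \<Rightarrow> nat \<Rightarrow> complex" where
  "block_trace M m = (\<Sum>S\<in>{S. card S = m}. M $ S $ S)"

definition delta3_trace :: "'q::finite op \<Rightarrow> complex" where
  "delta3_trace M = block_trace M (CARD('q) - 1) - block_trace M 1
     - of_nat (CARD('q) - 2) * (block_trace M CARD('q) - block_trace M 0)"

definition C_diag :: "nat \<Rightarrow> 'q::finite set \<Rightarrow> complex" where
  "C_diag l S = (\<Sum>B\<in>{B::'q set. card B = l}. \<Prod>j\<in>B. if j \<in> S then -1 else 1)"

lemma C_op_entry: "C_op l $ S $ S' = (if S = S' then C_diag l S else 0)"
  unfolding C_op_def C_diag_def by (simp add: sum_component pauliZ_def)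

lemma trace_mult_C_op: "trace (M ** C_op l) = (\<Sum>S\<in>UNIV. M $ S $ S * C_diag l (S::'q::finite set))"
  unfolding trace_def matrix_matrix_mult_def
  by (simp add: C_op_entry if_distrib cong: if_cong)

lemma sum_UNIV_Int:
  fixes A :: "'q::finite set" and \<phi> :: "'q set \<Rightarrow> 'a::comm_semiring_1"
  shows "(\<Sum>S\<in>UNIV. \<phi> (S \<inter> A)) = of_nat (2 ^ (CARD('q) - card A)) * (\<Sum>T\<in>Pow A. \<phi> T)"
proof -
  have card_fibre: "card {S. S \<inter> A = T} = 2 ^ (CARD('q) - card A)" if "T \<subseteq> A" for T
  proof -
    have "card {S. S \<inter> A = T} = card (Pow (-A))"
      by (rule bij_betw_same_card[of "\<lambda>S. S - A"], rule bij_betw_byWitness[where f'="\<lambda>R. T \<union> R"])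
         (use that in auto)
    then show ?thesis
      by (simp add: card_Pow Compl_eq_Diff_UNIV card_Diff_subset)
  qed
  have "(\<Sum>S\<in>UNIV. \<phi> (S \<inter> A)) = (\<Sum>T\<in>Pow A. \<Sum>S\<in>{S\<in>UNIV. S \<inter> A = T}. \<phi> (S \<inter> A))"
    by (rule sum.group[symmetric]) auto
  also have "\<dots> = (\<Sum>T\<in>Pow A. of_nat (2 ^ (CARD('q) - card A)) * \<phi> T)"
    by (intro sum.cong refl) (simp add: card_fibre)
  finally show ?thesis by (simp add: sum_distrib_left)
qed

lemma prod_sign_eq_power:
  assumes "T \<subseteq> A" "finite A"
  shows "(\<Prod>j\<in>A. if j \<in> T then -1 else (1::'a::comm_ring_1)) = (-1) ^ card T"
proof -
  have "(\<Prod>j\<in>A. if j \<in> T then -1 else (1::'a)) = (\<Prod>j\<in>A \<inter> T. -1)"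
    using assms(2) by (subst prod.If_cases) (auto simp: Int_def)
  then show ?thesis using assms by (simp add: Int_absorb1)
qed

text \<open>Flipping qubit \<open>j0 \<in> B - A\<close> is an involution of the summation range that fixes
  \<open>S \<inter> A\<close> and negates the sign product over \<open>B\<close>.\<close>
lemma sum_sign_prod_eq_0:
  fixes A B :: "'q::finite set" and g :: "'q set \<Rightarrow> 'a::{idom, ring_char_0}"
  assumes "j0 \<in> B" "j0 \<notin> A"
  shows "(\<Sum>S\<in>UNIV. g (S \<inter> A) * (\<Prod>j\<in>B. if j \<in> S then -1 else 1)) = 0"
proof -
  define flip where "flip = (\<lambda>S::'q set. if j0 \<in> S then S - {j0} else insert j0 S)"
  define h where "h = (\<lambda>S. g (S \<inter> A) * (\<Prod>j\<in>B. if j \<in> S then -1 else (1::'a)))"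
  have flip_flip: "flip (flip S) = S" for S unfolding flip_def by auto
  have "bij flip"
    by (rule bij_betw_byWitness[where f'=flip]) (auto simp: flip_flip)
  have h_flip: "h (flip S) = - h S" for S
  proof -
    have prod_split: "(\<Prod>j\<in>B. if j \<in> X then -1 else (1::'a)) =
       (if j0 \<in> X then -1 else 1) * (\<Prod>j\<in>B-{j0}. if j \<in> X then -1 else 1)" for X
      using assms by (simp add: prod.remove)
    have "(\<Prod>j\<in>B-{j0}. if j \<in> flip S then -1 else (1::'a)) = (\<Prod>j\<in>B-{j0}. if j \<in> S then -1 else 1)"
      by (rule prod.cong) (auto simp: flip_def)
    moreover have "flip S \<inter> A = S \<inter> A" unfolding flip_def using assms by auto
    ultimately show ?thesis
      unfolding h_def using prod_split[of "flip S"] prod_split[of S] by (simp add: flip_def)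
  qed
  have "sum h UNIV = sum (h \<circ> flip) UNIV"
    using sum.reindex_bij_betw[OF \<open>bij flip\<close>, of h] by simp
  also have "\<dots> = - sum h UNIV" by (simp add: h_flip sum_negf)
  finally show ?thesis unfolding h_def by simp
qed

lemma sum_diag_mult_C_diag:
  fixes A :: "'q::finite set" and g :: "'q set \<Rightarrow> complex"
  assumes "card A \<le> l"
  shows "(\<Sum>S\<in>UNIV. g (S \<inter> A) * C_diag l S) =
    (if card A = l then of_nat (2 ^ (CARD('q) - l)) * (\<Sum>T\<in>Pow A. (-1) ^ card T * g T) else 0)"
proof -
  let ?sgn = "\<lambda>B S. \<Prod>j\<in>B. if j \<in> S then -1 else (1::complex)"
  have term_B: "(\<Sum>S\<in>UNIV. g (S \<inter> A) * ?sgn B S) =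
      (if B = A then of_nat (2 ^ (CARD('q) - l)) * (\<Sum>T\<in>Pow A. (-1) ^ card T * g T) else 0)"
    if B: "card B = l" for B
  proof (cases "B = A")
    case True
    have "(\<Sum>S\<in>UNIV. g (S \<inter> A) * ?sgn B S) = (\<Sum>S\<in>UNIV. (\<lambda>T. g T * ?sgn A T) (S \<inter> A))"
      using True by (intro sum.cong refl prod.cong) auto
    also have "\<dots> = of_nat (2 ^ (CARD('q) - card A)) * (\<Sum>T\<in>Pow A. g T * ?sgn A T)"
      by (rule sum_UNIV_Int)
    finally show ?thesis
      using True B by (simp add: prod_sign_eq_power mult.commute)
  next
    case False
    have "\<not> B \<subseteq> A"
      using False B assms card_subset_eq[of A B] card_mono[of A B] by auto
    then obtain j0 where "j0 \<in> B" "j0 \<notin> A" by blast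
    then show ?thesis
      using False sum_sign_prod_eq_0[of j0 B A g] by simp
  qed
  have "(\<Sum>S\<in>UNIV. g (S \<inter> A) * C_diag l S) = (\<Sum>B\<in>{B. card B = l}. \<Sum>S\<in>UNIV. g (S \<inter> A) * ?sgn B S)"
    unfolding C_diag_def by (simp add: sum_distrib_left sum.swap[of _ UNIV])
  also have "\<dots> = (\<Sum>B\<in>{B. card B = l}.
      if B = A then of_nat (2 ^ (CARD('q) - l)) * (\<Sum>T\<in>Pow A. (-1) ^ card T * g T) else 0)"
    by (intro sum.cong refl) (simp add: term_B)
  also have "\<dots> = (if card A = l then of_nat (2 ^ (CARD('q) - l)) * (\<Sum>T\<in>Pow A. (-1) ^ card T * g T) else 0)"
    by (subst sum.delta) auto
  finally show ?thesis .
qed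

lemma sets_card_eq_0: "{S::'q::finite set. card S = 0} = {{}}"
  by auto

lemma sets_card_eq_CARD: "{S::'q::finite set. card S = CARD('q)} = {UNIV}"
  using card_subset_eq[of "UNIV::'q set"] by auto

lemma sets_card_eq_1: "{S::'q::finite set. card S = 1} = range (\<lambda>j. {j})"
  by (auto simp: card_1_singleton_iff)

lemma sets_card_eq_CARD_minus_1: "{S::'q::finite set. card S = CARD('q) - 1} = range (\<lambda>j. -{j})"
proof -
  have "card S = CARD('q) - 1 \<longleftrightarrow> card (-S) = 1" for S :: "'q set"
    by (auto simp: Compl_eq_Diff_UNIV card_Diff_subset)
  then show ?thesis
    by (auto simp: card_1_singleton_iff)
qed

lemma sum_UNIV_outside_const:
  fixes f :: "'q::finite \<Rightarrow> 'a::comm_semiring_1"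
  assumes "\<And>j. j \<notin> A \<Longrightarrow> f j = c"
  shows "(\<Sum>j\<in>UNIV. f j) = (\<Sum>j\<in>A. f j) + of_nat (CARD('q) - card A) * c"
proof -
  have "(\<Sum>j\<in>UNIV. f j) = (\<Sum>j\<in>UNIV - A. f j) + (\<Sum>j\<in>A. f j)"
    by (rule sum.subset_diff) auto
  also have "(\<Sum>j\<in>UNIV - A. f j) = (\<Sum>j\<in>UNIV - A. c)"
    using assms by (intro sum.cong) auto
  finally show ?thesis by (simp add: card_Diff_subset add.commute)
qed

lemma block_trace_diag_Int:
  fixes M :: "'q::finite op"
  assumes diag: "\<And>S. M $ S $ S = g (S \<inter> A)"
  shows "block_trace M 0 = g {}"
    and "block_trace M CARD('q) = g A"
    and "block_trace M 1 = (\<Sum>j\<in>A. g {j}) + of_nat (CARD('q) - card A) * g {}"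
    and "block_trace M (CARD('q) - 1) = (\<Sum>j\<in>A. g (A - {j})) + of_nat (CARD('q) - card A) * g A"
proof -
  show "block_trace M 0 = g {}" "block_trace M CARD('q) = g A"
    unfolding block_trace_def sets_card_eq_0 sets_card_eq_CARD by (simp_all add: diag)
  have "block_trace M 1 = (\<Sum>j\<in>UNIV. g ({j} \<inter> A))"
    unfolding block_trace_def sets_card_eq_1 by (subst sum.reindex) (auto simp: diag)
  also have "\<dots> = (\<Sum>j\<in>A. g ({j} \<inter> A)) + of_nat (CARD('q) - card A) * g {}"
    by (rule sum_UNIV_outside_const) auto
  finally show "block_trace M 1 = (\<Sum>j\<in>A. g {j}) + of_nat (CARD('q) - card A) * g {}"
    by (simp cong: sum.cong)
  have "block_trace M (CARD('q) - 1) = (\<Sum>j\<in>UNIV. g (-{j} \<inter> A))"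
    unfolding block_trace_def sets_card_eq_CARD_minus_1 by (subst sum.reindex) (auto simp: inj_on_def diag)
  also have "\<dots> = (\<Sum>j\<in>A. g (-{j} \<inter> A)) + of_nat (CARD('q) - card A) * g A"
    by (rule sum_UNIV_outside_const) (simp add: Int_absorb1 subset_Compl_singleton)
  also have "(\<Sum>j\<in>A. g (-{j} \<inter> A)) = (\<Sum>j\<in>A. g (A - {j}))"
    by (intro sum.cong refl) (auto simp: Diff_eq Int_commute)
  finally show "block_trace M (CARD('q) - 1) = (\<Sum>j\<in>A. g (A - {j})) + of_nat (CARD('q) - card A) * g A" .
qed

lemma sum_Pow_insert:
  assumes "a \<notin> X" "finite X"
  shows "(\<Sum>T\<in>Pow (insert a X). f T) = (\<Sum>T\<in>Pow X. f T) + (\<Sum>T\<in>Pow X. f (insert a T))"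
proof -
  have "(\<Sum>T\<in>Pow (insert a X). f T) = (\<Sum>T\<in>Pow X. f T) + (\<Sum>T\<in>insert a ` Pow X. f T)"
    unfolding Pow_insert using assms by (intro sum.union_disjoint) auto
  also have "(\<Sum>T\<in>insert a ` Pow X. f T) = (\<Sum>T\<in>Pow X. f (insert a T))"
    using assms by (subst sum.reindex) (auto simp: inj_on_def)
  finally show ?thesis .
qed

text \<open>The identity is checked separately for each support size \<open>card A \<le> 3\<close>; for \<open>card A < 3\<close>
  both sides vanish.\<close>
lemma sum_diag_mult_C_diag_3:
  fixes M :: "'q::finite op" and A :: "'q set"
  assumes n: "CARD('q) \<ge> 3" and A: "card A \<le> 3"
    and diag: "\<And>S. M $ S $ S = g (S \<inter> A)"
  shows "(\<Sum>S\<in>UNIV. M $ S $ S * C_diag 3 S) = of_nat (2 ^ (CARD('q) - 3)) * delta3_trace M"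
proof -
  define n where "n = CARD('q)"
  have lhs: "(\<Sum>S\<in>UNIV. M $ S $ S * C_diag 3 S) =
    (if card A = 3 then of_nat (2 ^ (n - 3)) * (\<Sum>T\<in>Pow A. (-1) ^ card T * g T) else 0)"
    unfolding diag n_def by (rule sum_diag_mult_C_diag[OF A])
  have rhs: "delta3_trace M =
     (\<Sum>j\<in>A. g (A - {j})) + of_nat (n - card A) * g A - ((\<Sum>j\<in>A. g {j}) + of_nat (n - card A) * g {})
     - of_nat (n - 2) * (g A - g {})"
    unfolding delta3_trace_def block_trace_diag_Int[of M g A, OF diag] n_def by simp
  obtain k where k: "n = k + 3"
    using n unfolding n_def by (metis le_add_diff_inverse2)
  consider "card A = 0" | "card A = 1" | "card A = 2" | "card A = 3" using A by linarith
  then show ?thesis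
  proof cases
    case 1
    then show ?thesis unfolding lhs rhs n_def[symmetric] k by simp
  next
    case 2
    then obtain a where "A = {a}" by (auto simp: card_1_singleton_iff)
    then show ?thesis unfolding lhs rhs n_def[symmetric] k by (simp add: algebra_simps)
  next
    case 3
    then obtain a b where "A = {a, b}" "a \<noteq> b" by (auto simp: card_2_iff)
    moreover have "{a, b} - {a} = {b}" "{a, b} - {b} = {a}" using \<open>a \<noteq> b\<close> by auto
    ultimately show ?thesis unfolding lhs rhs n_def[symmetric] k by (simp add: algebra_simps)
  next
    case 4
    then obtain a b c where A: "A = {a, b, c}" "a \<noteq> b" "b \<noteq> c" "a \<noteq> c"
      by (auto simp: card_3_iff)
    have "{a, b, c} - {a} = {b, c}" "{a, b, c} - {b} = {a, c}" "{a, b, c} - {c} = {a, b}"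
      using A by auto
    moreover have alternating_sum: "(\<Sum>T\<in>Pow A. (-1) ^ card T * g T) =
       g {} - g {a} - g {b} - g {c} + g {a, b} + g {a, c} + g {b, c} - g {a, b, c}"
      using A by (simp add: sum_Pow_insert insert_commute)
    ultimately show ?thesis
      unfolding lhs rhs alternating_sum n_def[symmetric] k using 4 A
      by (simp add: algebra_simps insert_commute)
  qed
qed

lemma block_trace_sum: "block_trace (sum F X) m = (\<Sum>A\<in>X. block_trace (F A) m)"
  unfolding block_trace_def by (simp add: sum_component sum.swap[of _ X])

lemma delta3_trace_sum: "delta3_trace (sum F X) = (\<Sum>A\<in>X. delta3_trace (F A))"
  unfolding delta3_trace_def block_trace_sum
  by (simp add: sum_subtractf sum_distrib_left right_diff_distrib)

lemma trace_mult_C_op_3: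
  fixes M :: "'q::finite op"
  assumes n: "CARD('q) \<ge> 3" and "k_local 3 M"
  shows "trace (M ** C_op 3) = of_nat (2 ^ (CARD('q) - 3)) * delta3_trace M"
proof -
  obtain F where F: "\<And>A. acts_within A (F A)" and M: "M = (\<Sum>A\<in>{A. card A \<le> 3}. F A)"
    using \<open>k_local 3 M\<close> unfolding k_local_def by blast
  have term_A: "(\<Sum>S\<in>UNIV. F A $ S $ S * C_diag 3 S) = of_nat (2 ^ (CARD('q) - 3)) * delta3_trace (F A)"
    if "card A \<le> 3" for A
  proof -
    obtain f where "\<And>S S'. F A $ S $ S' = (if S - A = S' - A then f (S \<inter> A) (S' \<inter> A) else 0)"
      using F[of A] unfolding acts_within_def by blast
    then have "F A $ S $ S = (\<lambda>T. f T T) (S \<inter> A)" for S by simp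
    then show ?thesis by (rule sum_diag_mult_C_diag_3[OF n that])
  qed
  have "trace (M ** C_op 3) = (\<Sum>A\<in>{A. card A \<le> 3}. \<Sum>S\<in>UNIV. F A $ S $ S * C_diag 3 S)"
    unfolding trace_mult_C_op M by (simp add: sum_component sum_distrib_right sum.swap[of _ UNIV])
  also have "\<dots> = of_nat (2 ^ (CARD('q) - 3)) * delta3_trace M"
    unfolding M delta3_trace_sum by (simp add: term_A sum_distrib_left)
  finally show ?thesis .
qed

section \<open>Determinants over a finite index set\<close>

definition det_on :: "'a set \<Rightarrow> ('a \<Rightarrow> 'a \<Rightarrow> complex) \<Rightarrow> complex" where
  "det_on X A = (\<Sum>p\<in>{p. p permutes X}. of_int (sign p) * (\<Prod>S\<in>X. A S (p S)))"

lemma block_det_eq_det_on: "block_det V m = det_on {S. card S = m} (\<lambda>S S'. V $ S $ S')"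
  unfolding block_det_def det_on_def ..

lemma det_on_identical_rows:
  assumes X: "finite X" and ab: "a \<in> X" "b \<in> X" "a \<noteq> b" and eq: "A a = A b"
  shows "det_on X A = 0"
proof -
  define \<tau> where "\<tau> = Transposition.transpose a b"
  have \<tau>: "\<tau> permutes X" unfolding \<tau>_def using ab by (simp add: permutes_swap_id)
  have \<tau>\<tau>: "\<tau> (\<tau> x) = x" for x unfolding \<tau>_def by simp
  have A\<tau>: "A (\<tau> S) = A S" for S unfolding \<tau>_def using eq by (auto simp: Transposition.transpose_def)
  let ?P = "{p. p permutes X}"
  define f where "f = (\<lambda>p. of_int (sign p) * (\<Prod>S\<in>X. A S (p S)))"
  have bij: "bij_betw (\<lambda>p. p \<circ> \<tau>) ?P ?P"
    by (rule bij_betw_byWitness[where f'="\<lambda>p. p \<circ> \<tau>"])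
       (auto simp: \<tau>\<tau> fun_eq_iff intro: permutes_compose[OF \<tau>])
  have f_swap: "f (p \<circ> \<tau>) = - f p" if p: "p \<in> ?P" for p
  proof -
    have "permutation p" "permutation \<tau>"
      using p \<tau> X by (auto simp: permutation_permutes)
    then have "sign (p \<circ> \<tau>) = - sign p"
      using ab by (simp add: sign_compose \<tau>_def sign_swap_id)
    moreover have "(\<Prod>S\<in>X. A S (p (\<tau> S))) = (\<Prod>S\<in>X. A (\<tau> S) (p S))"
      using prod.reindex_bij_betw[OF permutes_imp_bij[OF \<tau>], of "\<lambda>S. A (\<tau> S) (p S)"]
      by (simp add: \<tau>\<tau>)
    ultimately show ?thesis unfolding f_def by (simp add: A\<tau>)
  qed
  have "sum f ?P = sum (\<lambda>p. f (p \<circ> \<tau>)) ?P"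
    using sum.reindex_bij_betw[OF bij, of f] by simp
  also have "\<dots> = - sum f ?P" by (simp add: f_swap sum_negf)
  finally show ?thesis unfolding det_on_def f_def by simp
qed

lemma det_on_fun_upd:
  assumes "finite X" "a \<in> X"
  shows "det_on X (A(a := r)) =
    (\<Sum>p\<in>{p. p permutes X}. of_int (sign p) * (r (p a) * (\<Prod>S\<in>X - {a}. A S (p S))))"
  unfolding det_on_def
proof (intro sum.cong refl)
  fix p
  have "(\<Prod>S\<in>X - {a}. (A(a := r)) S (p S)) = (\<Prod>S\<in>X - {a}. A S (p S))"
    by (rule prod.cong) auto
  then show "of_int (sign p) * (\<Prod>S\<in>X. (A(a := r)) S (p S)) =
      of_int (sign p) * (r (p a) * (\<Prod>S\<in>X - {a}. A S (p S)))"
    using assms by (simp add: prod.remove)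
qed

lemma det_on_fun_upd_linear_combination:
  assumes X: "finite X" and a: "a \<in> X"
  shows "det_on X (A(a := (\<lambda>S'. \<Sum>k\<in>X. c k * A k S'))) = c a * det_on X A"
proof -
  have "det_on X (A(a := (\<lambda>S'. \<Sum>k\<in>X. c k * A k S'))) = (\<Sum>k\<in>X. c k * det_on X (A(a := A k)))"
    unfolding det_on_fun_upd[OF X a]
    by (simp add: sum_distrib_left sum_distrib_right sum.swap[of _ X] algebra_simps)
  also have "\<dots> = (\<Sum>k\<in>X. if k = a then c a * det_on X A else 0)"
    using det_on_identical_rows[OF X a, of _ "A(a := A _)"] by (intro sum.cong refl) auto
  also have "\<dots> = c a * det_on X A" using a X by (simp add: sum.delta')
  finally show ?thesis .
qed

lemma det_on_one:
  assumes X: "finite X"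
  shows "det_on X (\<lambda>S S'. if S = S' then 1 else 0) = 1"
proof -
  have diag: "(\<Prod>S\<in>X. if S = p S then 1 else 0) = (if p = id then 1 else (0::complex))"
    if "p permutes X" for p
  proof (cases "p = id")
    case False
    then obtain S where S: "p S \<noteq> S" by (auto simp: fun_eq_iff)
    then have "S \<in> X" using that permutes_not_in by fastforce
    then have "(\<Prod>S\<in>X. if S = p S then 1 else (0::complex)) = 0"
      using X S by (intro prod_zero) (auto intro!: bexI[of _ S])
    then show ?thesis using False by simp
  qed simp
  have "det_on X (\<lambda>S S'. if S = S' then 1 else 0) = (\<Sum>p\<in>{p. p permutes X}. if p = id then 1 else 0)"
    unfolding det_on_def by (intro sum.cong refl) (simp add: diag)
  also have "\<dots> = 1" by (subst sum.delta) (auto simp: X permutes_id finite_permutations)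
  finally show ?thesis .
qed

lemma has_vector_derivative_prod:
  fixes f :: "'i \<Rightarrow> real \<Rightarrow> 'a::real_normed_field"
  assumes "\<And>i. i \<in> I \<Longrightarrow> (f i has_vector_derivative f' i) (at x within s)"
  shows "((\<lambda>t. \<Prod>i\<in>I. f i t) has_vector_derivative (\<Sum>i\<in>I. f' i * (\<Prod>j\<in>I - {i}. f j x))) (at x within s)"
  using has_derivative_prod[of I f "\<lambda>i h. h *\<^sub>R f' i" x s] assms
  by (simp add: has_vector_derivative_def scaleR_sum_right)

lemma has_vector_derivative_det_on:
  assumes X: "finite X"
    and deriv: "\<And>S S'. ((\<lambda>t. F t S S') has_vector_derivative F' S S') (at x within s)"
  shows "((\<lambda>t. det_on X (F t)) has_vector_derivative (\<Sum>a\<in>X. det_on X ((F x)(a := F' a)))) (at x within s)"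
proof -
  have "((\<lambda>t. det_on X (F t)) has_vector_derivative
      (\<Sum>p\<in>{p. p permutes X}. of_int (sign p) * (\<Sum>a\<in>X. F' a (p a) * (\<Prod>S\<in>X - {a}. F x S (p S)))))
      (at x within s)"
    unfolding det_on_def
    by (intro has_vector_derivative_sum has_vector_derivative_mult_right has_vector_derivative_prod deriv)
  also have "(\<Sum>p\<in>{p. p permutes X}. of_int (sign p) * (\<Sum>a\<in>X. F' a (p a) * (\<Prod>S\<in>X - {a}. F x S (p S)))) =
      (\<Sum>a\<in>X. det_on X ((F x)(a := F' a)))"
    by (simp add: det_on_fun_upd[OF X] sum_distrib_left sum.swap[of _ X])
  finally show ?thesis .
qed

text \<open>Jacobi's formula \<open>(det B)' = tr(A) det B\<close> for \<open>B' = A B\<close>, restricted to an invariant block \<open>X\<close>.\<close>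
lemma sum_det_on_fun_upd_mult:
  fixes A B :: "'a::finite \<Rightarrow> 'a \<Rightarrow> complex"
  assumes block: "\<And>a k. a \<in> X \<Longrightarrow> k \<notin> X \<Longrightarrow> A a k = 0"
  shows "(\<Sum>a\<in>X. det_on X (B(a := (\<lambda>S'. \<Sum>k\<in>UNIV. A a k * B k S')))) = (\<Sum>a\<in>X. A a a) * det_on X B"
proof -
  have "(\<Sum>k\<in>UNIV. A a k * B k S') = (\<Sum>k\<in>X. A a k * B k S')" if "a \<in> X" for a S'
    using block[OF that] by (intro sum.mono_neutral_right) auto
  then show ?thesis
    by (simp add: det_on_fun_upd_linear_combination sum_distrib_right cong: sum.cong)
qed

section \<open>Piecewise continuous functions\<close>

lemma
  fixes a b :: real
  assumes "a < b"
  shows at_within_Ioo_at_right: "at a within {a<..<b} = at_right a"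
    and at_within_Ioo_at_left: "at b within {a<..<b} = at_left b"
  using assms by (auto intro: at_within_nhd[where S="{..<b}"] at_within_nhd[where S="{a<..}"])

lemma integrable_on_Icc_if_continuous_on_Ioo:
  fixes h :: "real \<Rightarrow> 'a::banach"
  assumes ab: "a < b" and cont: "continuous_on {a<..<b} h"
    and lim_a: "(h \<longlongrightarrow> l) (at a within {a<..<b})"
    and lim_b: "(h \<longlongrightarrow> r) (at b within {a<..<b})"
  shows "h integrable_on {a..b}"
proof -
  define g where "g = (\<lambda>y. if y = a then l else if y = b then r else h y)"
  have "eventually (\<lambda>y. h y = g y) (at x within {a<..<b})" for x
    by (auto simp: eventually_at_filter g_def)
  then have g_lim: "(g \<longlongrightarrow> L) (at x within {a<..<b})" if "(h \<longlongrightarrow> L) (at x within {a<..<b})" for x L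
    using that tendsto_cong by blast
  have "continuous_on {a..b} g"
  proof (rule continuous_on_IccI[OF _ _ _ ab])
    show "(g \<longlongrightarrow> g a) (at_right a)" "(g \<longlongrightarrow> g b) (at_left b)"
      using g_lim[OF lim_a] g_lim[OF lim_b] ab
      by (simp_all add: g_def at_within_Ioo_at_right at_within_Ioo_at_left)
  next
    fix y assume y: "a < y" "y < b"
    then have "(h \<longlongrightarrow> h y) (at y within {a<..<b})"
      using cont by (meson continuous_on_def greaterThanLessThan_iff)
    then have "(g \<longlongrightarrow> h y) (at y within {a<..<b})"
      by (rule g_lim)
    moreover have "at y within {a<..<b} = at y"
      using y by (intro at_within_open) auto
    moreover have "g y = h y"
      using y by (simp add: g_def)
    ultimately show "(g \<longlongrightarrow> g y) (at y)" by simp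
  qed
  then have "g integrable_on {a..b}" by (rule integrable_continuous_interval)
  then show ?thesis
    by (rule integrable_spike_finite[where S="{a, b}", rotated 2]) (auto simp: g_def)
qed

lemma integrable_on_Icc_between_discontinuities:
  fixes h :: "real \<Rightarrow> 'a::banach"
  assumes cont: "continuous_on ({0..T} - D) h"
    and lims: "\<And>s. s \<in> D \<Longrightarrow> (\<exists>l. (h \<longlongrightarrow> l) (at s within {0..<s})) \<and> (\<exists>r. (h \<longlongrightarrow> r) (at s within {s<..T}))"
    and ab: "0 \<le> a" "a < b" "b \<le> T" and avoid: "{a<..<b} \<inter> D = {}"
  shows "h integrable_on {a..b}"
proof -
  have sub: "{a<..<b} \<subseteq> {0..T} - D" using ab avoid by auto
  have lim: "\<exists>l. (h \<longlongrightarrow> l) (at x within {a<..<b})" if "x \<in> {a, b}" for x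
  proof (cases "x \<in> D")
    case True
    then obtain l r where "(h \<longlongrightarrow> l) (at x within {0..<x})" "(h \<longlongrightarrow> r) (at x within {x<..T})"
      using lims by blast
    moreover have "{a<..<b} \<subseteq> (if x = a then {x<..T} else {0..<x})"
      using that ab by auto
    ultimately show ?thesis
      by (cases "x = a") (auto intro: tendsto_within_subset)
  next
    case False
    then have "x \<in> {0..T} - D" using that ab by auto
    then have "(h \<longlongrightarrow> h x) (at x within {0..T} - D)"
      using cont by (simp add: continuous_on_def)
    then show ?thesis using sub by (blast intro: tendsto_within_subset)
  qed
  obtain l r where "(h \<longlongrightarrow> l) (at a within {a<..<b})" "(h \<longlongrightarrow> r) (at b within {a<..<b})"
    using lim[of a] lim[of b] by blast
  with continuous_on_subset[OF cont sub] show ?thesis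
    by (intro integrable_on_Icc_if_continuous_on_Ioo[OF \<open>a < b\<close>])
qed

lemma piecewise_continuous_integrable:
  fixes h :: "real \<Rightarrow> 'a::banach"
  assumes "piecewise_continuous T h"
  shows "h integrable_on {0..T}"
proof -
  obtain D where D: "finite D" and cont: "continuous_on ({0..T} - D) h"
    and lims: "\<And>s. s \<in> D \<Longrightarrow> (\<exists>l. (h \<longlongrightarrow> l) (at s within {0..<s})) \<and> (\<exists>r. (h \<longlongrightarrow> r) (at s within {s<..T}))"
    using assms unfolding piecewise_continuous_def by blast
  note piece = integrable_on_Icc_between_discontinuities[OF cont lims]
  have "h integrable_on cbox 0 T"
  proof (rule integrable_on_little_subintervals, intro ballI)
    fix x assume x: "x \<in> cbox 0 T"
    obtain \<delta> where \<delta>: "\<delta> > 0" "\<And>y. y \<in> D \<Longrightarrow> y \<noteq> x \<Longrightarrow> \<delta> \<le> dist x y"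
      using finite_set_avoid[OF D, of x] by blast
    show "\<exists>d>0. \<forall>u v. x \<in> cbox u v \<and> cbox u v \<subseteq> ball x d \<and> cbox u v \<subseteq> cbox 0 T \<longrightarrow>
        h integrable_on cbox u v"
    proof (intro exI[of _ \<delta>] conjI allI impI \<delta>(1), elim conjE)
      fix u v assume "x \<in> cbox u v" "cbox u v \<subseteq> ball x \<delta>" "cbox u v \<subseteq> cbox 0 T"
      then have uv: "0 \<le> u" "u \<le> x" "x \<le> v" "v \<le> T" and near: "{u..v} \<subseteq> ball x \<delta>"
        by auto
      have avoid: "y \<notin> D" if "y \<in> {u..v}" "y \<noteq> x" for y
        using \<delta>(2)[of y] near that by (auto simp: dist_commute)
      have left: "h integrable_on {u..x}"
        using uv avoid integrable_on_refl[of h x] by (cases "u = x") (auto intro!: piece)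
      have right: "h integrable_on {x..v}"
        using uv avoid integrable_on_refl[of h x] by (cases "x = v") (auto intro!: piece)
      show "h integrable_on cbox u v"
        using Henstock_Kurzweil_Integration.integrable_combine[OF uv(2,3) left right] by simp
    qed
  qed
  then show ?thesis by simp
qed

lemma piecewise_continuous_compose:
  fixes f :: "real \<Rightarrow> 'a::t2_space"
  assumes pc: "piecewise_continuous T f" and g: "continuous_on UNIV g"
  shows "piecewise_continuous T (\<lambda>t. g (f t))"
proof -
  have g_at: "isCont g y" for y using g by (simp add: continuous_on_eq_continuous_at)
  obtain D where "finite D" "D \<subseteq> {0..T}" and cont: "continuous_on ({0..T} - D) f"
    and lims: "\<And>s. s \<in> D \<Longrightarrow> (\<exists>l. (f \<longlongrightarrow> l) (at s within {0..<s})) \<and> (\<exists>r. (f \<longlongrightarrow> r) (at s within {s<..T}))"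
    using pc unfolding piecewise_continuous_def by blast
  moreover have "continuous_on ({0..T} - D) (\<lambda>t. g (f t))"
    by (rule continuous_on_compose2[OF g cont]) auto
  moreover have "(\<exists>l. ((\<lambda>t. g (f t)) \<longlongrightarrow> l) (at s within {0..<s})) \<and>
      (\<exists>r. ((\<lambda>t. g (f t)) \<longlongrightarrow> r) (at s within {s<..T}))" if "s \<in> D" for s
    using lims[OF that] isCont_tendsto_compose[OF g_at] by blast
  ultimately show ?thesis unfolding piecewise_continuous_def by blast
qed

lemma piecewise_continuous_isCont:
  assumes "piecewise_continuous T h"
  obtains K where "finite K" "\<And>x. x \<in> {0..T} - K \<Longrightarrow> x \<in> {0<..<T} \<and> isCont h x"
proof -
  obtain D where D: "finite D" and cont: "continuous_on ({0..T} - D) h"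
    using assms unfolding piecewise_continuous_def by blast
  have "x \<in> {0<..<T} \<and> isCont h x" if "x \<in> {0..T} - (D \<union> {0, T})" for x
  proof -
    have x: "x \<in> {0<..<T} - D" using that by auto
    moreover have "x \<in> interior ({0..T} - D)"
      using D x by (intro interiorI[of "{0<..<T} - D"]) (auto simp: open_Diff finite_imp_closed)
    ultimately show ?thesis
      using continuous_on_interior[OF cont] by simp
  qed
  moreover have "finite (D \<union> {0, T})" using D by simp
  ultimately show ?thesis using that by blast
qed

section \<open>Liouville's formula for the blocks of the time-ordered exponential\<close>

lemma totalZ_entry:
  "totalZ $ S $ S' = (if S = S' then of_nat CARD('q) - 2 * of_nat (card S) else (0::complex))"
  for S S' :: "'q::finite set"
proof -
  have "(\<Sum>j\<in>UNIV. if j \<in> S then -1 else (1::complex)) = (\<Sum>j\<in>S. -1) + of_nat (CARD('q) - card S)"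
    using sum_UNIV_outside_const[of S "\<lambda>j. if j \<in> S then -1 else (1::complex)" 1] by simp
  then show ?thesis
    unfolding totalZ_def pauliZ_def by (auto simp: sum_component of_nat_diff card_mono)
qed

lemma u1_invariant_entry_eq_0:
  fixes M :: "'q::finite op"
  assumes "u1_invariant M" "card S \<noteq> card S'"
  shows "M $ S $ S' = 0"
proof -
  let ?z = "\<lambda>S::'q set. of_nat CARD('q) - 2 * of_nat (card S) :: complex"
  have "(M ** totalZ) $ S $ S' = (\<Sum>k\<in>UNIV. if k = S' then M $ S $ k * ?z k else 0)"
    unfolding matrix_matrix_mult_def vec_lambda_beta by (intro sum.cong) (auto simp: totalZ_entry)
  moreover have "(totalZ ** M) $ S $ S' = (\<Sum>k\<in>UNIV. if k = S then ?z k * M $ k $ S' else 0)"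
    unfolding matrix_matrix_mult_def vec_lambda_beta by (intro sum.cong) (auto simp: totalZ_entry)
  moreover have "(M ** totalZ) $ S $ S' = (totalZ ** M) $ S $ S'"
    using assms(1) unfolding u1_invariant_def by simp
  ultimately show ?thesis
    using assms(2) by (auto simp: algebra_simps)
qed

lemma continuous_on_block_trace: "continuous_on UNIV (\<lambda>M::'q::finite op. block_trace M m)"
  unfolding block_trace_def
  by (intro continuous_on_sum linear_continuous_on
      bounded_linear_compose[OF bounded_linear_vec_nth bounded_linear_vec_nth])

lemma isCont_block_trace: "isCont H x \<Longrightarrow> isCont (\<lambda>s. block_trace (H s) m) x"
  unfolding block_trace_def by (intro continuous_intros) simp

lemma integrable_block_trace:
  fixes H :: "real \<Rightarrow> 'q::finite op"
  assumes "piecewise_continuous T H"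
  shows "(\<lambda>s. block_trace (H s) m) integrable_on {0..T}"
  by (rule piecewise_continuous_integrable
      [OF piecewise_continuous_compose[OF assms continuous_on_block_trace]])

lemma integral_has_vector_derivative_interior:
  fixes f :: "real \<Rightarrow> 'a::banach"
  assumes "f integrable_on {a..b}" "x \<in> {a<..<b}" "isCont f x"
  shows "((\<lambda>u. integral {a..u} f) has_vector_derivative f x) (at x)"
proof -
  have "at x within {a..b} = at x"
    using assms(2) by (intro at_within_interior) auto
  then show ?thesis
    using integral_has_vector_derivative_continuous_at[OF assms(1), of x "{}"] assms
    by (simp add: continuous_at_imp_continuous_within)
qed

lemma time_ordered_exp_entry:
  assumes "time_ordered_exp T H V" "t \<in> {0..T}"
  shows "((\<lambda>s. - \<i> * (H s ** V s) $ S $ S') has_integral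
      (V t $ S $ S' - (if S = S' then 1 else 0))) {0..t}"
proof -
  have "((\<lambda>s. \<chi> a b. - \<i> * (H s ** V s) $ a $ b) has_integral (V t - mat 1)) {0..t}"
    using assms unfolding time_ordered_exp_def by blast
  from has_integral_linear[OF this bounded_linear_compose[OF bounded_linear_vec_nth bounded_linear_vec_nth]]
  show ?thesis by (simp add: o_def mat_def)
qed

lemma time_ordered_exp_at_0:
  assumes "time_ordered_exp T H V" "0 \<le> T"
  shows "V 0 $ S $ S' = (if S = S' then 1 else 0)"
proof -
  have "((\<lambda>s. - \<i> * (H s ** V s) $ S $ S') has_integral (V 0 $ S $ S' - (if S = S' then 1 else 0))) {0}"
    using time_ordered_exp_entry[OF assms(1), of 0] assms(2) by simp
  then have "V 0 $ S $ S' - (if S = S' then 1 else 0) = 0"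
    by (rule has_integral_unique[OF _ has_integral_refl(2)])
  then show ?thesis by simp
qed

lemma time_ordered_exp_has_vector_derivative:
  fixes H V :: "real \<Rightarrow> 'q::finite op"
  assumes V: "time_ordered_exp T H V" and x: "x \<in> {0<..<T}" and H: "isCont H x"
  shows "((\<lambda>t. V t $ S $ S') has_vector_derivative (- \<i> * (H x ** V x) $ S $ S')) (at x)"
proof -
  define f where "f = (\<lambda>s. - \<i> * (H s ** V s) $ S $ S')"
  have f_int: "(f has_integral (V t $ S $ S' - (if S = S' then 1 else 0))) {0..t}" if "t \<in> {0..T}" for t
    unfolding f_def using time_ordered_exp_entry[OF V that] .
  have "isCont V x"
    using V x by (intro continuous_on_interior[of "{0..T}"]) (auto simp: time_ordered_exp_def)
  then have "isCont f x"
    using H unfolding f_def matrix_matrix_mult_def vec_lambda_beta by (intro continuous_intros) simp_all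
  moreover have "f integrable_on {0..T}" using f_int[of T] x by auto
  ultimately have "((\<lambda>t. integral {0..t} f) has_vector_derivative f x) (at x)"
    using x by (intro integral_has_vector_derivative_interior)
  then have "((\<lambda>t. (if S = S' then 1 else 0) + integral {0..t} f) has_vector_derivative f x) (at x)"
    using has_vector_derivative_add[OF has_vector_derivative_const] by fastforce
  then have "((\<lambda>t. V t $ S $ S') has_vector_derivative f x) (at x)"
    by (rule has_vector_derivative_transform_within_open[where S="{0<..<T}"])
       (use x integral_unique[OF f_int] in auto)
  then show ?thesis by (simp add: f_def)
qed

lemma block_det_has_vector_derivative:
  fixes H V :: "real \<Rightarrow> 'q::finite op"
  assumes V: "time_ordered_exp T H V" and x: "x \<in> {0<..<T}" and H: "isCont H x"
    and u1: "u1_invariant (H x)"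
  shows "((\<lambda>t. block_det (V t) m) has_vector_derivative
      (- \<i> * block_trace (H x) m * block_det (V x) m)) (at x)"
proof -
  define X where "X = {S::'q set. card S = m}"
  have "((\<lambda>t. det_on X (\<lambda>S S'. V t $ S $ S')) has_vector_derivative
      (\<Sum>a\<in>X. det_on X ((\<lambda>S S'. V x $ S $ S')(a := (\<lambda>S'. - \<i> * (H x ** V x) $ a $ S')))))
      (at x)"
    by (intro has_vector_derivative_det_on time_ordered_exp_has_vector_derivative[OF V x H])
       (simp add: X_def)
  also have "(\<Sum>a\<in>X. det_on X ((\<lambda>S S'. V x $ S $ S')(a := (\<lambda>S'. - \<i> * (H x ** V x) $ a $ S')))) =
      (\<Sum>a\<in>X. - \<i> * H x $ a $ a) * det_on X (\<lambda>S S'. V x $ S $ S')"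
    using sum_det_on_fun_upd_mult[of X "\<lambda>a k. - \<i> * H x $ a $ k" "\<lambda>S S'. V x $ S $ S'"]
      u1_invariant_entry_eq_0[OF u1]
    by (simp add: X_def matrix_matrix_mult_def sum_distrib_left mult.assoc)
  finally show ?thesis
    unfolding block_det_eq_det_on X_def block_trace_def by (simp add: sum_distrib_left)
qed

text \<open>\<open>block_det (V t) m * exp (\<i> \<integral>\<^sub>0\<^sup>t block_trace (H s) m ds)\<close> has derivative zero off a finite set.\<close>
lemma block_det_time_ordered_exp:
  fixes H V :: "real \<Rightarrow> 'q::finite op"
  assumes T: "0 \<le> T" and pc: "piecewise_continuous T H"
    and u1: "\<forall>t\<in>{0..T}. u1_invariant (H t)"
    and V: "time_ordered_exp T H V"
  shows "block_det (V T) m = exp (- \<i> * integral {0..T} (\<lambda>s. block_trace (H s) m))"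
proof -
  define \<Psi> where "\<Psi> = (\<lambda>t. integral {0..t} (\<lambda>s. block_trace (H s) m))"
  define K where "K = (\<lambda>t. block_det (V t) m * exp (\<i> * \<Psi> t))"
  obtain D where D: "finite D" "\<And>x. x \<in> {0..T} - D \<Longrightarrow> x \<in> {0<..<T} \<and> isCont H x"
    using piecewise_continuous_isCont[OF pc] by blast
  have K_deriv: "(K has_derivative (\<lambda>h. 0)) (at x within {0..T})" if "x \<in> {0..T} - D" for x
  proof -
    have x: "x \<in> {0<..<T}" and H: "isCont H x" using D(2)[OF that] by auto
    have "(\<Psi> has_vector_derivative block_trace (H x) m) (at x)"
      unfolding \<Psi>_def using integrable_block_trace[OF pc] x
      by (intro integral_has_vector_derivative_interior isCont_block_trace H)
    moreover have "((\<lambda>z. exp (\<i> * z)) has_field_derivative \<i> * exp (\<i> * \<Psi> x)) (at (\<Psi> x))"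
      by (auto intro!: derivative_eq_intros)
    ultimately have "((\<lambda>t. exp (\<i> * \<Psi> t)) has_vector_derivative
        block_trace (H x) m * (\<i> * exp (\<i> * \<Psi> x))) (at x)"
      using field_vector_diff_chain_at by (fastforce simp: o_def)
    then have "(K has_vector_derivative block_det (V x) m * (block_trace (H x) m * (\<i> * exp (\<i> * \<Psi> x)))
        + - \<i> * block_trace (H x) m * block_det (V x) m * exp (\<i> * \<Psi> x)) (at x)"
      unfolding K_def using block_det_has_vector_derivative[OF V x H] u1 x
      by (intro has_vector_derivative_mult) auto
    then have "(K has_vector_derivative 0) (at x)"
      by (simp add: algebra_simps)
    then show ?thesis
      by (auto simp: has_vector_derivative_def intro: has_derivative_at_withinI)
  qed
  have "continuous_on {0..T} V"
    using V by (simp add: time_ordered_exp_def)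
  then have "continuous_on {0..T} K"
    unfolding K_def \<Psi>_def block_det_def
    by (intro continuous_intros indefinite_integral_continuous_1 integrable_block_trace[OF pc])
  moreover have "K 0 = 1"
    unfolding K_def \<Psi>_def block_det_eq_det_on time_ordered_exp_at_0[OF V T]
    by (simp add: det_on_one)
  ultimately have "K T = 1"
    using T D(1) K_deriv by (intro has_derivative_zero_unique_strong_interval) auto
  then show ?thesis
    unfolding K_def \<Psi>_def by (simp add: exp_minus field_simps)
qed

section \<open>Phases\<close>

lemma cong_2pi_sym: "cong_2pi a b \<Longrightarrow> cong_2pi b a"
  unfolding cong_2pi_def by (metis minus_diff_eq mult_minus_left of_int_minus)

lemma cong_2pi_diff:
  assumes "cong_2pi a b" "cong_2pi c d"
  shows "cong_2pi (a - c) (b - d)"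
proof -
  obtain k l :: int where "a - b = of_int k * 2 * of_real pi" "c - d = of_int l * 2 * of_real pi"
    using assms unfolding cong_2pi_def by blast
  then have "(a - c) - (b - d) = of_int (k - l) * 2 * of_real pi"
    by (simp add: algebra_simps)
  then show ?thesis unfolding cong_2pi_def by blast
qed

lemma cong_2pi_mult_of_int:
  assumes "cong_2pi a b"
  shows "cong_2pi (of_int k * a) (of_int k * b)"
proof -
  obtain l :: int where "a - b = of_int l * 2 * of_real pi"
    using assms unfolding cong_2pi_def by blast
  then have "of_int k * a - of_int k * b = of_int (k * l) * 2 * of_real pi"
    by (simp add: algebra_simps flip: right_diff_distrib)
  then show ?thesis unfolding cong_2pi_def by blast
qed

lemma cong_2pi_Arg_exp:
  assumes "Im z = 0"
  shows "cong_2pi (of_real (Arg (exp (- \<i> * z)))) (- z)"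
proof -
  define w where "w = exp (- \<i> * z)"
  have "norm w = 1" unfolding w_def using assms by (simp add: norm_exp_eq_Re)
  then have "exp (\<i> * of_real (Arg w)) = w"
    using cis_Arg[of w] by (simp add: cis_conv_exp sgn_div_norm w_def)
  then obtain k :: int where "\<i> * of_real (Arg w) = - \<i> * z + of_int (2 * k) * pi * \<i>"
    unfolding w_def exp_eq by blast
  then have "\<i> * (of_real (Arg w) - - z) = \<i> * (of_int k * 2 * of_real pi)"
    by (simp add: algebra_simps)
  then have "of_real (Arg w) - - z = of_int k * 2 * of_real pi"
    by (simp only: mult_cancel_left) simp
  then show ?thesis unfolding cong_2pi_def w_def by blast
qed

lemma Im_block_trace_hermitian:
  assumes "hermitian M"
  shows "Im (block_trace M m) = 0"
proof -
  have "Im (M $ S $ S) = 0" for S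
    using arg_cong[OF assms[unfolded hermitian_def, rule_format, of S S], of Im] by simp
  then show ?thesis unfolding block_trace_def by simp
qed

lemma theta_time_ordered_exp:
  fixes H V :: "real \<Rightarrow> 'q::finite op"
  assumes T: "0 \<le> T" and pc: "piecewise_continuous T H"
    and herm: "\<forall>t\<in>{0..T}. hermitian (H t)"
    and u1: "\<forall>t\<in>{0..T}. u1_invariant (H t)"
    and V: "time_ordered_exp T H V"
  shows "cong_2pi (of_real (theta (V T) m)) (- integral {0..T} (\<lambda>s. block_trace (H s) m))"
proof -
  have "((\<lambda>s. Im (block_trace (H s) m)) has_integral Im (integral {0..T} (\<lambda>s. block_trace (H s) m))) {0..T}"
    by (intro has_integral_Im integrable_integral integrable_block_trace[OF pc])
  moreover have "((\<lambda>s. Im (block_trace (H s) m)) has_integral 0) {0..T}"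
    using herm Im_block_trace_hermitian by (intro has_integral_is_0) blast
  ultimately have "Im (integral {0..T} (\<lambda>s. block_trace (H s) m)) = 0"
    by (rule has_integral_unique)
  then show ?thesis
    unfolding theta_def block_det_time_ordered_exp[OF T pc u1 V] by (rule cong_2pi_Arg_exp)
qed

lemma body_phase_3:
  fixes H :: "real \<Rightarrow> 'q::finite op"
  assumes n: "CARD('q) \<ge> 3" and pc: "piecewise_continuous T H"
    and loc: "\<forall>t\<in>{0..T}. k_local 3 (H t)"
  defines "J \<equiv> \<lambda>m. integral {0..T} (\<lambda>s. block_trace (H s) m)"
  shows "body_phase 3 T H = of_nat (2 ^ (CARD('q) - 3)) *
    - (J (CARD('q) - 1) - J 1 - of_nat (CARD('q) - 2) * (J CARD('q) - J 0))"
proof -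
  have "((\<lambda>s. block_trace (H s) m) has_integral J m) {0..T}" for m
    unfolding J_def by (rule integrable_integral[OF integrable_block_trace[OF pc]])
  then have "((\<lambda>t. of_nat (2 ^ (CARD('q) - 3)) * delta3_trace (H t)) has_integral
      of_nat (2 ^ (CARD('q) - 3)) * (J (CARD('q) - 1) - J 1 - of_nat (CARD('q) - 2) * (J CARD('q) - J 0))) {0..T}"
    unfolding delta3_trace_def by (intro has_integral_mult_right has_integral_diff)
  then have "((\<lambda>t. trace (H t ** C_op 3)) has_integral
      of_nat (2 ^ (CARD('q) - 3)) * (J (CARD('q) - 1) - J 1 - of_nat (CARD('q) - 2) * (J CARD('q) - J 0))) {0..T}"
    by (rule has_integral_eq[rotated]) (simp add: loc trace_mult_C_op_3[OF n])
  then show ?thesis unfolding body_phase_def by (simp add: integral_unique algebra_simps)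
qed

theorem mainTheorem8:
  fixes H :: "real \<Rightarrow> complex ^ ('q::finite set) ^ ('q set)"
    and V :: "real \<Rightarrow> complex ^ ('q set) ^ ('q set)"
    and T :: real
  assumes n3: "CARD('q) \<ge> 3"
    and T0: "0 \<le> T"
    and pc: "piecewise_continuous T H"
    and herm: "\<forall>t\<in>{0..T}. hermitian (H t)"
    and u1: "\<forall>t\<in>{0..T}. u1_invariant (H t)"
    and loc: "\<forall>t\<in>{0..T}. k_local 3 (H t)"
    and V: "time_ordered_exp T H V"
  shows "cong_2pi (body_phase 3 T H)
           (of_nat (2 ^ (CARD('q) - 3)) * complex_of_real (Delta3 (V T)))"
proof -
  define n where "n = CARD('q)"
  define J where "J = (\<lambda>m. integral {0..T} (\<lambda>s. block_trace (H s) m))"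
  define \<theta> where "\<theta> = (\<lambda>m. complex_of_real (theta (V T) m))"
  have "complex_of_real (Delta3 (V T)) = \<theta> (n - 1) - \<theta> 1 - of_int (int n - 2) * (\<theta> n - \<theta> 0)"
    unfolding Delta3_def \<theta>_def n_def by simp
  moreover have "cong_2pi (\<theta> m) (- J m)" for m
    unfolding \<theta>_def J_def by (rule theta_time_ordered_exp[OF T0 pc herm u1 V])
  ultimately have "cong_2pi (complex_of_real (Delta3 (V T)))
      (- J (n - 1) - - J 1 - of_int (int n - 2) * (- J n - - J 0))"
    by (simp only: cong_2pi_diff cong_2pi_mult_of_int)
  then have "cong_2pi (of_int (2 ^ (n - 3)) * complex_of_real (Delta3 (V T)))
      (of_int (2 ^ (n - 3)) * (- J (n - 1) - - J 1 - of_int (int n - 2) * (- J n - - J 0)))"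
    by (rule cong_2pi_mult_of_int)
  moreover have "of_int (2 ^ (n - 3)) * (- J (n - 1) - - J 1 - of_int (int n - 2) * (- J n - - J 0)) =
      body_phase 3 T H"
    using body_phase_3[OF n3 pc loc] n3 unfolding J_def n_def by (simp add: algebra_simps)
  ultimately show ?thesis
    unfolding n_def by (simp add: cong_2pi_sym)
qed

end
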